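(* Let $R \in \mathrm{SO}(3)$, let $t \in \mathbb{R}^3$, and let $E = [t]_\times R$ be non-zero. Put $\tau = \operatorname{tr} R$. Then $$\frac{1}{2}(\tau^2 - 1)\operatorname{tr}(EE^{\mathrm T}) + (\tau + 1)\operatorname{tr}(E^2) - \tau\,(\operatorname{tr} E)^2 = 0.$$
   Context: For a 3-vector $a$, $[a]_\times$ denotes the $3\times 3$ skew-symmetric matrix with $[a]_\times b = a\times b$ for every $b\in\mathbb{R}^3$. *)

theory Defs
  imports "HOL-Analysis.Analysis" "HOL-Analysis.Cross3"
begin

text \<open>The skew-symmetric cross-product matrix: its j-th column is a cross e_j,
so that (skew a) *v b = a cross b for all b.\<close>
definition skew :: "real^3 \<Rightarrow> real^3^3" where
  "skew a = (\<chi> i j. (cross3 a (axis j 1)) $ i)"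

end

theory Submission
  imports Defs
begin

text \<open>The traces involving \<open>E\<close> are quadratic forms in \<open>t\<close>. With \<open>n = t \<bullet> t\<close>, \<open>q = t \<bullet> R t\<close> and
  \<open>p = t \<bullet> v\<close>, where \<open>R - R\<^sup>T = [v]\<^sub>\<times>\<close>, one has \<open>tr(EE\<^sup>T) = 2n\<close>, \<open>tr(E\<^sup>2) = (1 - \<tau>\<^sup>2) n + 2\<tau> q\<close>
  and \<open>tr E = -p\<close>. For a rotation by \<open>\<theta>\<close> about a unit axis \<open>u\<close> we have \<open>v = 2 sin \<theta> u\<close> and
  \<open>\<tau> = 1 + 2 cos \<theta>\<close>, which gives \<open>p\<^sup>2 = 2(\<tau> + 1) q - (\<tau>\<^sup>2 - 1) n\<close>; substituting, the
  left-hand side vanishes identically.\<close>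

text \<open>The vector \<open>v\<close> with \<open>A - A\<^sup>T = [v]\<^sub>\<times>\<close>.\<close>
definition axial :: "real^3^3 \<Rightarrow> real^3" where
  "axial A = vector [A$3$2 - A$2$3, A$1$3 - A$3$1, A$2$1 - A$1$2]"

lemmas entrywise_3 = vec_eq_iff forall_3 sum_3 trace_def matrix_matrix_mult_def
  matrix_vector_mult_def transpose_def inner_vec_def skew_def cross3_def axis_def vector_def

lemma trace_skew_mult: "trace (skew t ** A) = - (t \<bullet> axial A)"
  by (simp add: entrywise_3 axial_def algebra_simps)

lemma trace_skew_mult_transpose_skew: "trace (skew t ** transpose (skew t)) = 2 * (t \<bullet> t)"
  by (simp add: entrywise_3 algebra_simps)

lemma trace_square_skew_mult:
  "trace ((skew t ** A) ** (skew t ** A)) =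
     (trace (transpose A ** A) - (trace A)^2) * (t \<bullet> t) - (A *v t) \<bullet> (A *v t)
     - (transpose A *v t) \<bullet> (transpose A *v t) + 2 * trace A * (t \<bullet> (A *v t))"
  by (simp add: entrywise_3 power2_eq_square algebra_simps)

lemma trace_mult_transpose_orthogonal_matrix:
  fixes A Q :: "'a::comm_ring_1^'n^'n"
  assumes "orthogonal_matrix Q"
  shows "trace ((A ** Q) ** transpose (A ** Q)) = trace (A ** transpose A)"
proof -
  have "(A ** Q) ** transpose (A ** Q) = A ** (Q ** transpose Q) ** transpose A"
    by (simp add: matrix_transpose_mul matrix_mul_assoc)
  with assms show ?thesis
    by (simp add: orthogonal_matrix_def)
qed

lemma inner_orthogonal_matrix_mult:
  fixes A :: "real^'n^'n"
  assumes "orthogonal_matrix A"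
  shows "(A *v x) \<bullet> (A *v y) = x \<bullet> y"
proof -
  have "(A *v x) \<bullet> (A *v y) = x \<bullet> ((transpose A ** A) *v y)"
    by (metis dot_lmul_matrix matrix_vector_mul_assoc vector_transpose_matrix)
  with assms show ?thesis
    by (simp add: orthogonal_matrix_def)
qed

lemma trace_square_skew_mult_orthogonal_matrix:
  assumes "orthogonal_matrix R"
  shows "trace ((skew t ** R) ** (skew t ** R)) =
    (1 - (trace R)^2) * (t \<bullet> t) + 2 * trace R * (t \<bullet> (R *v t))"
proof -
  have "trace (transpose R ** R) = 3"
    using assms by (simp add: orthogonal_matrix_def trace_I)
  moreover have "(R *v t) \<bullet> (R *v t) = t \<bullet> t"
    "(transpose R *v t) \<bullet> (transpose R *v t) = t \<bullet> t"
    using assms orthogonal_matrix_transpose by (blast intro: inner_orthogonal_matrix_mult)+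
  ultimately show ?thesis
    by (simp add: trace_square_skew_mult algebra_simps)
qed

lemma rotation_matrix_third_column:
  assumes "rotation_matrix R"
  shows "column 3 R = cross3 (column 1 R) (column 2 R)"
proof -
  have "R *v cross3 (axis 1 1) (axis 2 1) = cross3 (R *v axis 1 1) (R *v axis 2 1)"
    using cross_rotation_matrix [OF assms] by simp
  then show ?thesis
    by (simp add: entrywise_3 column_def)
qed

lemma rotation_matrix_axial_quadratic_form:
  assumes "rotation_matrix R"
  shows "(t \<bullet> axial R)^2 =
    2 * (trace R + 1) * (t \<bullet> (R *v t)) - ((trace R)^2 - 1) * (t \<bullet> t)"
proof -
  have "transpose R ** R = mat 1"
    using assms by (simp add: rotation_matrix_def orthogonal_matrix_def)
  then have "R$1$1*R$1$1 + R$2$1*R$2$1 + R$3$1*R$3$1 = 1"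
    "R$1$2*R$1$2 + R$2$2*R$2$2 + R$3$2*R$3$2 = 1"
    "R$1$1*R$1$2 + R$2$1*R$2$2 + R$3$1*R$3$2 = 0"
    by (simp_all add: entrywise_3 mat_def)
  moreover have "R$1$3 = R$2$1*R$3$2 - R$3$1*R$2$2" "R$2$3 = R$3$1*R$1$2 - R$1$1*R$3$2"
      "R$3$3 = R$1$1*R$2$2 - R$2$1*R$1$2"
    using rotation_matrix_third_column [OF assms] by (simp_all add: entrywise_3 column_def)
  ultimately show ?thesis
    by (simp add: entrywise_3 axial_def) algebra
qed

theorem proposition1:
  fixes R :: "real^3^3" and t :: "real^3"
  assumes "rotation_matrix R"
    and "skew t ** R \<noteq> 0"
  shows "let E = skew t ** R; \<tau> = trace R in
    (1/2) * (\<tau>^2 - 1) * trace (E ** transpose E) + (\<tau> + 1) * trace (E ** E)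
      - \<tau> * (trace E)^2 = 0"
proof -
  \<comment> \<open>The identity also holds when \<open>E = 0\<close>.\<close>
  have orth: "orthogonal_matrix R"
    using assms(1) by (simp add: rotation_matrix_def)
  define \<tau> where "\<tau> = trace R"
  define E where "E = skew t ** R"
  have trace_E_Et: "trace (E ** transpose E) = 2 * (t \<bullet> t)"
    unfolding E_def using orth
    by (simp add: trace_mult_transpose_orthogonal_matrix trace_skew_mult_transpose_skew)
  have trace_E_E: "trace (E ** E) = (1 - \<tau>^2) * (t \<bullet> t) + 2 * \<tau> * (t \<bullet> (R *v t))"
    unfolding E_def \<tau>_def using orth by (rule trace_square_skew_mult_orthogonal_matrix)
  have trace_E_sq: "(trace E)^2 = 2 * (\<tau> + 1) * (t \<bullet> (R *v t)) - (\<tau>^2 - 1) * (t \<bullet> t)"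
    unfolding E_def \<tau>_def using assms(1)
    by (simp add: trace_skew_mult rotation_matrix_axial_quadratic_form)
  show ?thesis
    unfolding Let_def E_def [symmetric] \<tau>_def [symmetric] trace_E_Et trace_E_E trace_E_sq
    by (simp add: field_simps power2_eq_square)
qed

end
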